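(* Let $\hat W$ be a first degree iMPO in regular form of bond dimension $\chi$, with upper-left block $\hat V$, and suppose the leading eigenvector $X$ of $T_V$ (the left eigenvector $XT_V=X$ with $X_{00}=1$) is positive semi-definite of rank $1+\chi'\le1+\chi$. Then there is a gauge transform $L\hat W=\hat W'L$, with $L$ a complex $(\chi'+2)\times(\chi+2)$ matrix of block form $\begin{pmatrix}1&\mathbf t&r\\0&\mathsf L&\mathbf s\\0&0&1\end{pmatrix}$, such that $\hat W'$ is an iMPO in regular form of bond dimension $\chi'$ and the leading eigenvector $X'$ of $T_{V'}$ ($\hat V'$ the upper-left block of $\hat W'$) is positive definite.
   Context: $\mathcal A$ is the algebra of operators on $\mathbb C^q$ with inner product $\langle\hat A,\hat B\rangle=\mathrm{Tr}[\hat A^\dagger\hat B]/\mathrm{Tr}[\hat 1]$ and orthonormal basis $\{\hat O_\alpha\}$ with $\hat O_0=\hat 1$; $(W_\alpha)_{ab}=\langle\hat O_\alpha,\hat W_{ab}\rangle$ and the transfer matrix acts by $XT_W=\sum_\alpha W_\alpha^\dagger XW_\alpha$. An iMPO in regular form of bond dimension $\chi$ is a $(\chi+2)\times(\chi+2)$ matrix with entries in $\mathcal A$ of block form $\begin{pmatrix}\hat 1&\hat{\mathbf c}&\hat d\\0&\hat{\mathsf A}&\hat{\mathbf b}\\0&0&\hat 1\end{pmatrix}$ (block sizes $1,\chi,1$), with upper-left block $\hat V=\begin{pmatrix}\hat 1&\hat{\mathbf c}\\0&\hat{\mathsf A}\end{pmatrix}$; it is first degree if every eigenvalue of $T_A$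 has modulus $<1$ (in which case $1$ is the unique eigenvalue of $T_V$ of modulus $\ge1$ and has a left eigenvector normalized by $X_{00}=1$). *)

theory Defs
  imports Complex_Main "Jordan_Normal_Form.Matrix" "Jordan_Normal_Form.DL_Rank"
begin

text \<open>Operators on C^q are q x q complex matrices.  An iMPO of bond dimension chi is
  represented by its operator-valued entries W a b (for a b < chi+2).\<close>

type_synonym impo = "nat \<Rightarrow> nat \<Rightarrow> complex mat"

definition op_inner :: "nat \<Rightarrow> complex mat \<Rightarrow> complex mat \<Rightarrow> complex" where
  "op_inner q A B = (\<Sum>i<q. \<Sum>j<q. cnj (A $$ (i,j)) * B $$ (i,j)) / of_nat q"

text \<open>Transfer matrix of an n x n operator-valued matrix W, acting on the left on an
  n x n complex matrix X:  X T_W = sum_alpha W_alpha^dagger X W_alpha.  Expanding in the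
  orthonormal basis gives (X T_W)_{bd} = sum_{a,c} X_{ac} <W_ab, W_cd> (basis independent).\<close>
definition transfer :: "nat \<Rightarrow> nat \<Rightarrow> impo \<Rightarrow> complex mat \<Rightarrow> complex mat" where
  "transfer q n W X = mat n n (\<lambda>(b,d). \<Sum>a<n. \<Sum>c<n. X $$ (a,c) * op_inner q (W a b) (W c d))"

definition regular_form :: "nat \<Rightarrow> nat \<Rightarrow> impo \<Rightarrow> bool" where
  "regular_form q chi W \<longleftrightarrow>
     (\<forall>a<chi+2. \<forall>b<chi+2. W a b \<in> carrier_mat q q) \<and>
     W 0 0 = 1\<^sub>m q \<and> W (chi+1) (chi+1) = 1\<^sub>m q \<and>
     (\<forall>a. 0 < a \<and> a < chi+2 \<longrightarrow> W a 0 = 0\<^sub>m q q) \<and>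
     (\<forall>b<chi+1. W (chi+1) b = 0\<^sub>m q q)"

definition A_block :: "impo \<Rightarrow> impo" where
  "A_block W = (\<lambda>a b. W (a+1) (b+1))"

definition V_block :: "impo \<Rightarrow> impo" where
  "V_block W = W"  \<comment> \<open>used with size chi+1, i.e. indices 0..chi\<close>

definition first_degree :: "nat \<Rightarrow> nat \<Rightarrow> impo \<Rightarrow> bool" where
  "first_degree q chi W \<longleftrightarrow>
     (\<forall>(lam::complex) Y. Y \<in> carrier_mat chi chi \<and> Y \<noteq> 0\<^sub>m chi chi \<and>
        transfer q chi (A_block W) Y = lam \<cdot>\<^sub>m Y \<longrightarrow> cmod lam < 1)"

definition leading_eigvec :: "nat \<Rightarrow> nat \<Rightarrow> impo \<Rightarrow> complex mat \<Rightarrow> bool" where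
  "leading_eigvec q chi W X \<longleftrightarrow>
     X \<in> carrier_mat (chi+1) (chi+1) \<and> transfer q (chi+1) (V_block W) X = X \<and> X $$ (0,0) = 1"

definition hermitian_mat :: "nat \<Rightarrow> complex mat \<Rightarrow> bool" where
  "hermitian_mat n X \<longleftrightarrow> X \<in> carrier_mat n n \<and>
     (\<forall>i<n. \<forall>j<n. X $$ (j,i) = cnj (X $$ (i,j)))"

definition quad_form :: "nat \<Rightarrow> complex mat \<Rightarrow> (nat \<Rightarrow> complex) \<Rightarrow> complex" where
  "quad_form n X v = (\<Sum>i<n. \<Sum>j<n. cnj (v i) * X $$ (i,j) * v j)"

definition pos_semidef :: "nat \<Rightarrow> complex mat \<Rightarrow> bool" where
  "pos_semidef n X \<longleftrightarrow> hermitian_mat n X \<and> (\<forall>v. 0 \<le> Re (quad_form n X v))"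

definition pos_def :: "nat \<Rightarrow> complex mat \<Rightarrow> bool" where
  "pos_def n X \<longleftrightarrow> hermitian_mat n X \<and>
     (\<forall>v. (\<exists>i<n. v i \<noteq> 0) \<longrightarrow> 0 < Re (quad_form n X v))"

definition gauge_block_form :: "nat \<Rightarrow> nat \<Rightarrow> complex mat \<Rightarrow> bool" where
  "gauge_block_form chi' chi L \<longleftrightarrow> L \<in> carrier_mat (chi'+2) (chi+2) \<and>
     L $$ (0,0) = 1 \<and> L $$ (chi'+1, chi+1) = 1 \<and>
     (\<forall>i. 0 < i \<and> i < chi'+2 \<longrightarrow> L $$ (i,0) = 0) \<and>
     (\<forall>j<chi+1. L $$ (chi'+1, j) = 0)"

text \<open>Gauge relation  L W = W' L  (W of size n, W' of size n', L of size n' x n),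
  stated entrywise: sum_k L_ik W_kj = sum_k W'_ik L_kj as operators on C^q.\<close>
definition gauge_rel :: "nat \<Rightarrow> nat \<Rightarrow> nat \<Rightarrow> complex mat \<Rightarrow> impo \<Rightarrow> impo \<Rightarrow> bool" where
  "gauge_rel q n' n L W W' \<longleftrightarrow>
     (\<forall>i<n'. \<forall>j<n. \<forall>u<q. \<forall>v<q.
        (\<Sum>k<n. L $$ (i,k) * (W k j) $$ (u,v)) = (\<Sum>k<n'. (W' i k) $$ (u,v) * L $$ (k,j)))"

end

theory Submission
  imports Defs "Jordan_Normal_Form.Schur_Decomposition"
begin

(*
  Write n = chi + 1 and r = chi' + 1. Choose r columns of X, the first one among them, forming a
  basis of its column space; with the selection matrix R this reads X = (X R) M with X R injective.
  Expanding operators in matrix units turns the fixed point equation into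
  X = (1/q) sum_uv V_uv^dagger X V_uv, where the V_uv are complex n x n matrices (slices of V).
  For P = 1 - R M we get 0 = P^dagger X P = (1/q) sum_uv (V_uv P)^dagger X (V_uv P), a sum of positive
  semidefinite matrices, so X V_uv P = 0, which by injectivity of X R means M V_uv R M = M V_uv.
  This invariance is exactly the gauge relation L W = W' L for L = diag(M, 1) and
  W' = L W diag(R, 1), whose upper left slices are M V_uv R. Finally X' = R^dagger X R is a fixed
  point of T_V' with X'_00 = X_00 = 1, and it is positive definite because X R is injective.
*)

lemma mat_adjoint_altdef:
  "mat_adjoint A = mat (dim_col A) (dim_row A) (\<lambda>(i,j). conjugate (A $$ (j,i)))"
  unfolding mat_adjoint_def by (rule eq_matI) (auto simp: mat_of_rows_index)

lemma dim_mat_adjoint [simp]: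
  "dim_row (mat_adjoint A) = dim_col A" "dim_col (mat_adjoint A) = dim_row A"
  by (simp_all add: mat_adjoint_altdef)

lemma index_mat_adjoint [simp]:
  "i < dim_col A \<Longrightarrow> j < dim_row A \<Longrightarrow> mat_adjoint A $$ (i,j) = conjugate (A $$ (j,i))"
  by (simp add: mat_adjoint_altdef)

lemma mat_adjoint_carrier_mat [simp]: "A \<in> carrier_mat m n \<Longrightarrow> mat_adjoint A \<in> carrier_mat n m"
  by (intro carrier_matI) auto

lemma mat_adjoint_mat_adjoint [simp]: "mat_adjoint (mat_adjoint A) = A"
  by (rule eq_matI) auto

lemma mat_adjoint_mult:
  fixes A B :: "'a :: conjugatable_field mat"
  assumes "dim_col A = dim_row B"
  shows "mat_adjoint (A * B) = mat_adjoint B * mat_adjoint A"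
proof (rule eq_matI)
  fix i j assume "i < dim_row (mat_adjoint B * mat_adjoint A)" "j < dim_col (mat_adjoint B * mat_adjoint A)"
  then have i: "i < dim_col B" and j: "j < dim_row A"
    by auto
  have "mat_adjoint (A * B) $$ (i,j) = conjugate (\<Sum>l\<in>{0..<dim_row B}. A $$ (j,l) * B $$ (l,i))"
    using assms i j by (simp add: scalar_prod_def)
  also have "\<dots> = (\<Sum>l\<in>{0..<dim_row B}. conjugate (B $$ (l,i)) * conjugate (A $$ (j,l)))"
    by (simp add: sum_conjugate conjugate_dist_mul mult.commute)
  also have "\<dots> = (mat_adjoint B * mat_adjoint A) $$ (i,j)"
    using assms i j by (simp add: scalar_prod_def)
  finally show "mat_adjoint (A * B) $$ (i,j) = (mat_adjoint B * mat_adjoint A) $$ (i,j)" .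
qed (use assms in simp_all)

lemma hermitian_mat_iff_mat_adjoint:
  "hermitian_mat n X \<longleftrightarrow> X \<in> carrier_mat n n \<and> mat_adjoint X = X"
proof
  assume "hermitian_mat n X"
  then have X: "X \<in> carrier_mat n n"
    and sym: "\<And>i j. i < n \<Longrightarrow> j < n \<Longrightarrow> X $$ (j,i) = cnj (X $$ (i,j))"
    unfolding hermitian_mat_def by blast+
  have "mat_adjoint X = X"
  proof (rule eq_matI)
    fix i j assume "i < dim_row X" "j < dim_col X"
    then show "mat_adjoint X $$ (i,j) = X $$ (i,j)"
      using X sym[of j i] by simp
  qed (use X in simp_all)
  with X show "X \<in> carrier_mat n n \<and> mat_adjoint X = X" ..
next
  assume X: "X \<in> carrier_mat n n \<and> mat_adjoint X = X"
  have "X $$ (j,i) = cnj (X $$ (i,j))" if "i < n" "j < n" for i j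
    using X that index_mat_adjoint[of j X i] by auto
  with X show "hermitian_mat n X"
    unfolding hermitian_mat_def by blast
qed

lemma mult_mat_assoc_dims:
  "dim_col A = dim_row B \<Longrightarrow> dim_col B = dim_row C \<Longrightarrow> A * B * C = A * (B * C)"
  by (rule assoc_mult_mat) (auto intro: carrier_matI)

lemma mat_eq_if_minus_eq_zero:
  fixes A B :: "'a :: ab_group_add mat"
  assumes A: "A \<in> carrier_mat m n" and B: "B \<in> carrier_mat m n" and AB: "A - B = 0\<^sub>m m n"
  shows "A = B"
proof (rule eq_matI)
  fix i j assume "i < dim_row B" "j < dim_col B"
  then have "(A - B) $$ (i,j) = 0"
    using AB B by simp
  then show "A $$ (i,j) = B $$ (i,j)"
    using A B \<open>i < dim_row B\<close> \<open>j < dim_col B\<close> by simp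
qed (use A B in auto)

lemma mult_mat_vec_unit_vec:
  fixes A :: "'a :: semiring_1 mat"
  assumes "A \<in> carrier_mat k m" "j < m"
  shows "A *\<^sub>v unit_vec m j = col A j"
  using col_mult2[OF assms(1) one_carrier_mat assms(2)] assms by simp

lemma mult_mat_vec_cancel_injective:
  fixes C :: "'a :: comm_ring_1 mat"
  assumes C: "C \<in> carrier_mat n r"
    and inj: "\<And>w. w \<in> carrier_vec r \<Longrightarrow> C *\<^sub>v w = 0\<^sub>v n \<Longrightarrow> w = 0\<^sub>v r"
    and ab: "a \<in> carrier_vec r" "b \<in> carrier_vec r" and eq: "C *\<^sub>v a = C *\<^sub>v b"
  shows "a = b"
proof -
  have "C *\<^sub>v (a - b) = C *\<^sub>v a - C *\<^sub>v b"
    using mult_minus_distrib_mat_vec[OF C ab] .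
  also have "\<dots> = 0\<^sub>v n"
    using eq C ab(2) by (metis minus_cancel_vec mult_mat_vec_carrier)
  finally have diff: "a - b = 0\<^sub>v r"
    using inj ab by (metis minus_carrier_vec)
  show ?thesis
  proof (rule eq_vecI)
    fix i assume "i < dim_vec b"
    then have "i < r" using ab by simp
    then have "(a - b) $ i = 0"
      using diff by simp
    then show "a $ i = b $ i"
      using ab \<open>i < r\<close> by simp
  qed (use ab in simp)
qed

lemma mult_mat_cancel_injective:
  fixes C :: "'a :: comm_ring_1 mat"
  assumes C: "C \<in> carrier_mat n r"
    and inj: "\<And>w. w \<in> carrier_vec r \<Longrightarrow> C *\<^sub>v w = 0\<^sub>v n \<Longrightarrow> w = 0\<^sub>v r"
    and PQ: "P \<in> carrier_mat r k" "Q \<in> carrier_mat r k" and eq: "C * P = C * Q"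
  shows "P = Q"
proof (rule eq_matI)
  fix i j assume "i < dim_row Q" "j < dim_col Q"
  then have i: "i < r" and j: "j < k"
    using PQ by auto
  have "C *\<^sub>v col P j = C *\<^sub>v col Q j"
    using col_mult2[OF C PQ(1) j] col_mult2[OF C PQ(2) j] eq by simp
  moreover have "col P j \<in> carrier_vec r" "col Q j \<in> carrier_vec r"
    using PQ by auto
  ultimately have "col P j = col Q j"
    using mult_mat_vec_cancel_injective[OF C inj] by blast
  then show "P $$ (i,j) = Q $$ (i,j)"
    using PQ i j by (metis carrier_matD index_col)
qed (use PQ in auto)

lemma sum_swap_outer:
  "(\<Sum>a\<in>A. \<Sum>c\<in>C. \<Sum>i\<in>I. f a c i) = (\<Sum>i\<in>I. \<Sum>a\<in>A. \<Sum>c\<in>C. f a c i)"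
proof -
  have "(\<Sum>a\<in>A. \<Sum>c\<in>C. \<Sum>i\<in>I. f a c i) = (\<Sum>a\<in>A. \<Sum>i\<in>I. \<Sum>c\<in>C. f a c i)"
    by (rule sum.cong[OF refl]) (rule sum.swap)
  also have "\<dots> = (\<Sum>i\<in>I. \<Sum>a\<in>A. \<Sum>c\<in>C. f a c i)"
    by (rule sum.swap)
  finally show ?thesis .
qed

lemma sandwich_index:
  fixes P Y :: "complex mat"
  assumes "P \<in> carrier_mat n k" "Y \<in> carrier_mat n n" "b < k" "d < k"
  shows "(mat_adjoint P * Y * P) $$ (b,d)
    = (\<Sum>a<n. \<Sum>c<n. cnj (P $$ (a,b)) * Y $$ (a,c) * P $$ (c,d))"
proof -
  have "(mat_adjoint P * Y * P) $$ (b,d) = (\<Sum>c<n. \<Sum>a<n. cnj (P $$ (a,b)) * Y $$ (a,c) * P $$ (c,d))"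
    using assms by (simp add: scalar_prod_def atLeast0LessThan sum_distrib_right)
  also have "\<dots> = (\<Sum>a<n. \<Sum>c<n. cnj (P $$ (a,b)) * Y $$ (a,c) * P $$ (c,d))"
    by (rule sum.swap)
  finally show ?thesis .
qed

lemma sandwich_sum_index:
  fixes P Y :: "complex mat"
  assumes P: "P \<in> carrier_mat n k" and Y: "Y \<in> carrier_mat n n"
    and F: "\<And>i. i \<in> I \<Longrightarrow> F i \<in> carrier_mat n n"
    and Y_eq: "\<And>a c. a < n \<Longrightarrow> c < n \<Longrightarrow> Y $$ (a,c) = (\<Sum>i\<in>I. F i $$ (a,c)) / s"
    and bd: "b < k" "d < k"
  shows "(mat_adjoint P * Y * P) $$ (b,d) = (\<Sum>i\<in>I. (mat_adjoint P * F i * P) $$ (b,d)) / s"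
proof -
  have pull: "x * (\<Sum>i\<in>I. f i) * y / s = (\<Sum>i\<in>I. x * f i * y / s)" for x y :: complex and f
    by (simp add: sum_distrib_left sum_distrib_right sum_divide_distrib)
  have "(mat_adjoint P * Y * P) $$ (b,d)
      = (\<Sum>a<n. \<Sum>c<n. \<Sum>i\<in>I. cnj (P $$ (a,b)) * F i $$ (a,c) * P $$ (c,d) / s)"
    unfolding sandwich_index[OF P Y bd] by (intro sum.cong refl) (simp add: Y_eq pull)
  also have "\<dots> = (\<Sum>i\<in>I. \<Sum>a<n. \<Sum>c<n. cnj (P $$ (a,b)) * F i $$ (a,c) * P $$ (c,d) / s)"
    by (rule sum_swap_outer)
  also have "\<dots> = (\<Sum>i\<in>I. (mat_adjoint P * F i * P) $$ (b,d)) / s"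
    using sandwich_index[OF P F bd] by (simp add: sum_divide_distrib)
  finally show ?thesis .
qed

section \<open>A basis of the column space\<close>

lemma (in vec_space) column_basis_exists:
  assumes X: "X \<in> carrier_mat n nc" and nc: "0 < nc" and nz: "col X 0 \<noteq> 0\<^sub>v n"
  obtains cl where "cl \<noteq> []" "hd cl = col X 0" "distinct cl" "set cl \<subseteq> set (cols X)"
    "lin_indpt (set cl)" "length cl = rank X" "\<And>j. j < nc \<Longrightarrow> col X j \<in> span (set cl)"
proof -
  let ?P = "\<lambda>T. T \<subseteq> set (cols X) \<and> lin_indpt T"
  have cols_X: "set (cols X) \<subseteq> carrier_vec n"
    using X cols_dim by blast
  have col_in: "col X j \<in> set (cols X)" if "j < nc" for j
    using X that by (metis cols_length cols_nth carrier_matD(2) nth_mem)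
  have "lin_indpt {}"
    by (metis (no_types) empty_subsetI fin_dim finite_basis_exists subset_li_is_li vec_vs vectorspace.basis_def)
  moreover have "col X 0 \<notin> span {}"
    using nz span_empty by auto
  ultimately have "lin_indpt {col X 0}"
    using lin_dep_iff_in_span[of "{}" "col X 0"] X by auto
  then obtain S where S: "finite S" "maximal S ?P" "col X 0 \<in> S"
    using maximal_exists_superset[of "set (cols X)" ?P "{col X 0}"] col_in[OF nc] by auto
  have S_cols: "S \<subseteq> set (cols X)" and S_indpt: "lin_indpt S"
    using S(2) unfolding maximal_def by auto
  have S_carrier: "S \<subseteq> carrier_vec n"
    using S_cols cols_X by auto
  have spans: "col X j \<in> span S" if j: "j < nc" for j
  proof (cases "col X j \<in> S")
    case True
    then show ?thesis
      using in_own_span[OF S_carrier] by auto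
  next
    case False
    then have "lin_dep (S \<union> {col X j})"
      using S(2) col_in[OF j] S_cols unfolding maximal_def by blast
    then show ?thesis
      using lin_dep_iff_in_span[OF S_carrier S_indpt _ False] col_in[OF j] cols_X by auto
  qed
  obtain s where s: "distinct s" "set s = S - {col X 0}"
    using S(1) finite_distinct_list by (metis finite_Diff)
  have "distinct (col X 0 # s)" "set (col X 0 # s) = S"
    using s S(3) by auto
  moreover have "length (col X 0 # s) = rank X"
    unfolding rank_card_indpt[OF X S(2)] using calculation distinct_card by fastforce
  ultimately show thesis
    using that[of "col X 0 # s"] S_cols S_indpt spans by simp
qed

lemma (in vec_space) mat_of_cols_injective:
  assumes cl: "set cl \<subseteq> carrier_vec n" "distinct cl" "lin_indpt (set cl)"
    and w: "w \<in> carrier_vec (length cl)" "mat_of_cols n cl *\<^sub>v w = 0\<^sub>v n"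
  shows "w = 0\<^sub>v (length cl)"
proof (rule ccontr)
  have C: "mat_of_cols n cl \<in> carrier_mat n (length cl)"
    by simp
  assume "w \<noteq> 0\<^sub>v (length cl)"
  then have "lin_dep (set (cols (mat_of_cols n cl)))"
    using lin_depI[OF C w(1) _ w(2)] cols_mat_of_cols[OF cl(1)] cl(2) by simp
  then show False
    using cl cols_mat_of_cols[OF cl(1)] by simp
qed

lemma (in vec_space) mat_of_cols_factor:
  assumes cl: "set cl \<subseteq> carrier_vec n" "distinct cl" and X: "X \<in> carrier_mat n nc"
    and spans: "\<And>j. j < nc \<Longrightarrow> col X j \<in> span (set cl)"
  obtains A where "A \<in> carrier_mat (length cl) nc" "X = mat_of_cols n cl * A"
proof -
  let ?C = "mat_of_cols n cl"
  have "\<exists>a. a \<in> carrier_vec (length cl) \<and> col X j = ?C *\<^sub>v a" if j: "j < nc" for j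
  proof -
    obtain a where "lincomb a (set cl) = col X j"
      using finite_in_span[OF _ cl(1) spans[OF j]] by auto
    moreover have "?C *\<^sub>v vec (length cl) (\<lambda>i. a (col ?C i)) = lincomb a (set cl)"
      using mat_mult_eq_lincomb[of ?C "length cl"] cols_mat_of_cols[OF cl(1)] cl(2) by simp
    ultimately show ?thesis
      by (intro exI[of _ "vec (length cl) (\<lambda>i. a (col ?C i))"]) auto
  qed
  then obtain coeff where coeff: "\<And>j. j < nc \<Longrightarrow> coeff j \<in> carrier_vec (length cl) \<and> col X j = ?C *\<^sub>v coeff j"
    by metis
  define A where "A = mat (length cl) nc (\<lambda>(i,j). coeff j $ i)"
  have A: "A \<in> carrier_mat (length cl) nc"
    unfolding A_def by auto
  have "X = ?C * A"
  proof (rule eq_matI)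
    fix i j assume "i < dim_row (?C * A)" "j < dim_col (?C * A)"
    then have i: "i < n" and j: "j < nc"
      using A by auto
    have "col A j = coeff j"
      unfolding A_def using j coeff[OF j] by (auto intro!: eq_vecI)
    then have "X $$ (i,j) = (?C *\<^sub>v col A j) $ i"
      using coeff[OF j] X i j by (metis carrier_matD index_col)
    then show "X $$ (i,j) = (?C * A) $$ (i,j)"
      using A i j by simp
  qed (use X A in auto)
  with A show thesis
    using that by blast
qed

lemma column_selection_factorization:
  fixes X :: "'a :: field mat"
  assumes X: "X \<in> carrier_mat n nc" and nc: "0 < nc" and nz: "col X 0 \<noteq> 0\<^sub>v n"
  defines "r \<equiv> vec_space.rank n X"
  obtains M R :: "'a mat" where "M \<in> carrier_mat r nc" "R \<in> carrier_mat nc r"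
    "X * R * M = X" "col M 0 = unit_vec r 0" "col R 0 = unit_vec nc 0"
    "\<And>w. w \<in> carrier_vec r \<Longrightarrow> (X * R) *\<^sub>v w = 0\<^sub>v n \<Longrightarrow> w = 0\<^sub>v r"
proof -
  interpret vec_space "TYPE('a)" n .
  obtain cl where cl: "cl \<noteq> []" "hd cl = col X 0" "distinct cl" "set cl \<subseteq> set (cols X)"
    "lin_indpt (set cl)" "length cl = r" and spans: "\<And>j. j < nc \<Longrightarrow> col X j \<in> span (set cl)"
    using column_basis_exists[OF X nc nz] unfolding r_def by metis
  have cl_carrier: "set cl \<subseteq> carrier_vec n"
    using cl(4) X cols_dim by blast
  obtain M where M: "M \<in> carrier_mat r nc" and XCM: "X = mat_of_cols n cl * M"
    using mat_of_cols_factor[OF cl_carrier cl(3) X spans] cl(6) by metis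
  have "\<exists>j<nc. cl ! i = col X j" if "i < r" for i
    using that cl(4,6) X by (metis cols_length cols_nth carrier_matD(2) in_set_conv_nth nth_mem subsetD)
  then obtain J0 where J0: "\<And>i. i < r \<Longrightarrow> J0 i < nc \<and> cl ! i = col X (J0 i)"
    by metis
  define J where "J i = (if i = 0 then 0 else J0 i)" for i
  have J: "J i < nc \<and> cl ! i = col X (J i)" if "i < r" for i
    using J0[OF that] cl(1,2) nc unfolding J_def by (auto simp: hd_conv_nth)
  define R :: "'a mat" where "R = mat nc r (\<lambda>(l,i). if l = J i then 1 else 0)"
  have R: "R \<in> carrier_mat nc r"
    unfolding R_def by auto
  have XR: "X * R = mat_of_cols n cl"
  proof (rule eq_matI)
    fix k i assume "k < dim_row (mat_of_cols n cl)" "i < dim_col (mat_of_cols n cl)"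
    then have k: "k < n" and i: "i < r"
      using cl(6) by auto
    have "(X * R) $$ (k,i) = (\<Sum>l\<in>{0..<nc}. X $$ (k,l) * (if l = J i then 1 else 0))"
      using X R k i by (simp add: scalar_prod_def R_def)
    also have "\<dots> = col X (J i) $ k"
      using J[OF i] X k by (simp add: if_distrib cong: if_cong)
    also have "\<dots> = mat_of_cols n cl $$ (k,i)"
      using J[OF i] k i cl(6) by (simp add: mat_of_cols_index)
    finally show "(X * R) $$ (k,i) = mat_of_cols n cl $$ (k,i)" .
  qed (use X R cl(6) in auto)
  let ?C = "mat_of_cols n cl"
  have C: "?C \<in> carrier_mat n r" and r: "0 < r"
    using cl(1,6) by auto
  have C_inj: "w = 0\<^sub>v r" if "w \<in> carrier_vec r" "?C *\<^sub>v w = 0\<^sub>v n" for w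
    using mat_of_cols_injective[OF cl_carrier cl(3,5)] that cl(6) by simp
  have "cl ! 0 \<in> carrier_vec n"
    using cl(1) cl_carrier by auto
  then have "col ?C 0 = col X 0"
    using cl(1,2) by (simp add: hd_conv_nth)
  then have "?C *\<^sub>v col M 0 = ?C *\<^sub>v unit_vec r 0"
    using col_mult2[OF C M nc] mult_mat_vec_unit_vec[OF C r] XCM by simp
  then have M0: "col M 0 = unit_vec r 0"
    using mult_mat_vec_cancel_injective[OF C C_inj] col_dim[of M 0] M by simp
  have R0: "col R 0 = unit_vec nc 0"
    using r nc by (intro eq_vecI) (auto simp: R_def J_def)
  show thesis
    using that[OF M R _ M0 R0] XR XCM C_inj by simp
qed

section \<open>Positive semidefinite matrices\<close>

lemma quad_form_shift:
  fixes z :: "nat \<Rightarrow> complex" and t :: real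
  assumes "hermitian_mat n X"
  defines "y \<equiv> \<lambda>i. \<Sum>j<n. X $$ (i,j) * z j"
  shows "Re (quad_form n X (\<lambda>i. z i - of_real t * y i))
    = Re (quad_form n X z) - 2 * t * (\<Sum>i<n. (cmod (y i))\<^sup>2) + t\<^sup>2 * Re (quad_form n X y)"
proof -
  let ?S = "\<Sum>i<n. cnj (y i) * y i"
  have herm: "\<And>i j. i < n \<Longrightarrow> j < n \<Longrightarrow> X $$ (i,j) = cnj (X $$ (j,i))"
    using assms(1) unfolding hermitian_mat_def by blast
  have pointwise: "cnj (z i - of_real t * y i) * X $$ (i,j) * (z j - of_real t * y j)
     = cnj (z i) * X $$ (i,j) * z j - of_real t * (cnj (z i) * X $$ (i,j) * y j)
       - of_real t * (cnj (y i) * X $$ (i,j) * z j) + of_real (t * t) * (cnj (y i) * X $$ (i,j) * y j)"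
    for i j
    by (simp add: algebra_simps)
  have expand: "quad_form n X (\<lambda>i. z i - of_real t * y i) = quad_form n X z
      - of_real t * (\<Sum>i<n. \<Sum>j<n. cnj (z i) * X $$ (i,j) * y j)
      - of_real t * (\<Sum>i<n. \<Sum>j<n. cnj (y i) * X $$ (i,j) * z j)
      + of_real (t * t) * quad_form n X y"
    unfolding quad_form_def pointwise
    by (simp only: sum.distrib sum_subtractf sum_distrib_left[symmetric])
  have cross_right: "(\<Sum>i<n. \<Sum>j<n. cnj (y i) * X $$ (i,j) * z j) = ?S"
    unfolding y_def by (simp add: sum_distrib_left mult.assoc)
  have conj_y: "(\<Sum>i<n. cnj (z i) * X $$ (i,j)) = cnj (y j)" if "j < n" for j
    unfolding y_def using that by (simp add: cnj_sum herm[of _ j] mult.commute)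
  have "(\<Sum>i<n. \<Sum>j<n. cnj (z i) * X $$ (i,j) * y j) = (\<Sum>j<n. \<Sum>i<n. cnj (z i) * X $$ (i,j) * y j)"
    by (rule sum.swap)
  also have "\<dots> = ?S"
    by (rule sum.cong[OF refl]) (simp add: sum_distrib_right[symmetric] conj_y)
  finally have cross_left: "(\<Sum>i<n. \<Sum>j<n. cnj (z i) * X $$ (i,j) * y j) = ?S" .
  have "Re (cnj w * w) = (cmod w)\<^sup>2" for w
    by (simp add: cmod_power2 power2_eq_square[of "Re w"] power2_eq_square[of "Im w"])
  then have "Re ?S = (\<Sum>i<n. (cmod (y i))\<^sup>2)"
    by (simp add: Re_sum)
  then show ?thesis
    unfolding expand cross_left cross_right by (simp add: power2_eq_square)
qed

lemma pos_semidef_null_vector: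
  assumes psd: "pos_semidef n X" and z: "Re (quad_form n X z) = 0" and i: "i < n"
  shows "(\<Sum>j<n. X $$ (i,j) * z j) = 0"
proof -
  define y where "y = (\<lambda>i. \<Sum>j<n. X $$ (i,j) * z j)"
  define S where "S = (\<Sum>i<n. (cmod (y i))\<^sup>2)"
  define K where "K = Re (quad_form n X y)"
  have herm: "hermitian_mat n X" and nonneg: "\<And>v. 0 \<le> Re (quad_form n X v)"
    using psd unfolding pos_semidef_def by blast+
  (* As Q(z) = 0, Q(z - t X z) = t^2 Q(X z) - 2 t |X z|^2, which is negative for small t > 0
     unless X z = 0. *)
  have bound: "2 * t * S \<le> t\<^sup>2 * K" for t :: real
    using nonneg[of "\<lambda>i. z i - of_real t * y i"] quad_form_shift[OF herm, of z t] z
    unfolding S_def K_def y_def by simp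
  have "S = 0"
  proof (rule ccontr)
    assume "S \<noteq> 0"
    moreover have "0 \<le> S"
      unfolding S_def by (simp add: sum_nonneg)
    ultimately have S: "0 < S" by simp
    have K: "0 \<le> K"
      unfolding K_def by (rule nonneg)
    define t where "t = S / (K + 1)"
    have t: "0 < t" "t * K < S"
      using S K by (simp_all add: t_def field_simps)
    have "2 * t * S \<le> t * (t * K)"
      using bound[of t] by (simp add: power2_eq_square)
    also have "\<dots> < t * S"
      using t by simp
    finally show False
      using t S by simp
  qed
  then have "\<forall>j\<in>{..<n}. (cmod (y j))\<^sup>2 = 0"
    unfolding S_def by (subst sum_nonneg_eq_0_iff[symmetric]) auto
  then show ?thesis
    using i unfolding y_def by simp
qed

lemma quad_form_eq_sandwich:
  assumes "Y \<in> carrier_mat k k"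
  shows "quad_form k Y z = (mat_adjoint (mat k 1 (\<lambda>(i,_). z i)) * Y * mat k 1 (\<lambda>(i,_). z i)) $$ (0,0)"
proof -
  have "(mat_adjoint (mat k 1 (\<lambda>(i,_). z i)) * Y * mat k 1 (\<lambda>(i,_). z i)) $$ (0,0)
      = (\<Sum>a<k. \<Sum>c<k. cnj (mat k 1 (\<lambda>(i,_). z i) $$ (a,0)) * Y $$ (a,c) * mat k 1 (\<lambda>(i,_). z i) $$ (c,0))"
    by (rule sandwich_index[OF mat_carrier assms]) simp_all
  then show ?thesis
    unfolding quad_form_def by simp
qed

lemma quad_form_congruence:
  assumes R: "R \<in> carrier_mat n r" and X: "X \<in> carrier_mat n n"
  shows "quad_form r (mat_adjoint R * X * R) w = quad_form n X (\<lambda>a. \<Sum>b<r. R $$ (a,b) * w b)"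
proof -
  let ?w = "mat r 1 (\<lambda>(i,_). w i)"
  have Rw: "R * ?w = mat n 1 (\<lambda>(a,_). \<Sum>b<r. R $$ (a,b) * w b)"
    using R by (intro eq_matI) (auto simp: scalar_prod_def atLeast0LessThan)
  have "quad_form r (mat_adjoint R * X * R) w = (mat_adjoint ?w * (mat_adjoint R * X * R) * ?w) $$ (0,0)"
    using R X by (intro quad_form_eq_sandwich) auto
  also have "\<dots> = (mat_adjoint (R * ?w) * X * (R * ?w)) $$ (0,0)"
    using carrier_matD[OF R] carrier_matD[OF X] by (simp add: mat_adjoint_mult mult_mat_assoc_dims)
  also have "\<dots> = quad_form n X (\<lambda>a. \<Sum>b<r. R $$ (a,b) * w b)"
    unfolding Rw by (rule quad_form_eq_sandwich[OF X, symmetric])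
  finally show ?thesis .
qed

lemma pos_def_congruence:
  assumes psd: "pos_semidef n X" and R: "R \<in> carrier_mat n r"
    and inj: "\<And>w. w \<in> carrier_vec r \<Longrightarrow> (X * R) *\<^sub>v w = 0\<^sub>v n \<Longrightarrow> w = 0\<^sub>v r"
  shows "pos_def r (mat_adjoint R * X * R)"
  unfolding pos_def_def
proof (intro conjI allI impI)
  have X: "X \<in> carrier_mat n n" and adj: "mat_adjoint X = X"
    using psd unfolding pos_semidef_def hermitian_mat_iff_mat_adjoint by blast+
  have "mat_adjoint R * X * R \<in> carrier_mat r r"
    using mult_carrier_mat[OF mult_carrier_mat[OF mat_adjoint_carrier_mat[OF R] X] R] .
  moreover have "mat_adjoint (mat_adjoint R * X * R) = mat_adjoint R * X * R"
    using adj carrier_matD[OF R] carrier_matD[OF X] by (simp add: mat_adjoint_mult mult_mat_assoc_dims)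
  ultimately show "hermitian_mat r (mat_adjoint R * X * R)"
    unfolding hermitian_mat_iff_mat_adjoint ..
  fix w :: "nat \<Rightarrow> complex" assume nonzero: "\<exists>i<r. w i \<noteq> 0"
  let ?y = "\<lambda>a. \<Sum>b<r. R $$ (a,b) * w b"
  have "0 \<le> Re (quad_form n X ?y)"
    using psd unfolding pos_semidef_def by blast
  moreover have "Re (quad_form n X ?y) \<noteq> 0"
  proof
    assume "Re (quad_form n X ?y) = 0"
    then have null: "(\<Sum>j<n. X $$ (i,j) * ?y j) = 0" if "i < n" for i
      using pos_semidef_null_vector[OF psd _ that] by blast
    have "(X * R) *\<^sub>v vec r w = X *\<^sub>v (R *\<^sub>v vec r w)"
      using X R by (intro assoc_mult_mat_vec) auto
    also have "\<dots> = 0\<^sub>v n"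
      using X R null by (intro eq_vecI) (auto simp: scalar_prod_def atLeast0LessThan)
    finally have "vec r w = 0\<^sub>v r"
      using inj by simp
    then show False
      using nonzero by (metis index_vec index_zero_vec(1))
  qed
  ultimately show "0 < Re (quad_form r (mat_adjoint R * X * R) w)"
    unfolding quad_form_congruence[OF R X] by simp
qed

section \<open>Slices of an iMPO and the transfer matrix\<close>

(* The (u,v) slice of W collects the (u,v) entries of its operator entries: it is the
   component of W along the matrix unit E_uv of operators on C^q. *)
definition impo_slice :: "nat \<Rightarrow> impo \<Rightarrow> nat \<Rightarrow> nat \<Rightarrow> complex mat" where
  "impo_slice n W u v = mat n n (\<lambda>(a,b). W a b $$ (u,v))"

definition impo_of_slices :: "nat \<Rightarrow> (nat \<Rightarrow> nat \<Rightarrow> complex mat) \<Rightarrow> impo" where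
  "impo_of_slices q F = (\<lambda>a b. mat q q (\<lambda>(u,v). F u v $$ (a,b)))"

lemma impo_slice_carrier [simp]: "impo_slice n W u v \<in> carrier_mat n n"
  by (simp add: impo_slice_def)

lemma dim_impo_slice [simp]:
  "dim_row (impo_slice n W u v) = n" "dim_col (impo_slice n W u v) = n"
  by (simp_all add: impo_slice_def)

lemma index_impo_slice [simp]:
  "a < n \<Longrightarrow> b < n \<Longrightarrow> impo_slice n W u v $$ (a,b) = W a b $$ (u,v)"
  by (simp add: impo_slice_def)

lemma impo_of_slices_carrier [simp]: "impo_of_slices q F a b \<in> carrier_mat q q"
  by (simp add: impo_of_slices_def)

lemma impo_slice_impo_of_slices_carrier:
  "u < q \<Longrightarrow> v < q \<Longrightarrow> F u v \<in> carrier_mat n n \<Longrightarrow> impo_slice n (impo_of_slices q F) u v = F u v"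
  by (rule eq_matI) (auto simp: impo_of_slices_def)

lemma impo_slice_truncate:
  "k \<le> m \<Longrightarrow> impo_slice k W u v = mat k k (\<lambda>(a,b). impo_slice m W u v $$ (a,b))"
  by (rule eq_matI) auto

lemma op_inner_pairs:
  "op_inner q A B = (\<Sum>p\<in>{..<q}\<times>{..<q}. cnj (A $$ p) * B $$ p) / of_nat q"
  by (simp add: op_inner_def sum.cartesian_product)

(* The matrix units E_uv are orthogonal, each of norm 1/q: hence the factor 1/q. *)
lemma transfer_index:
  assumes Y: "Y \<in> carrier_mat n n" and bd: "b < n" "d < n"
  shows "transfer q n W Y $$ (b,d) = (\<Sum>(u,v)\<in>{..<q}\<times>{..<q}.
      (mat_adjoint (impo_slice n W u v) * Y * impo_slice n W u v) $$ (b,d)) / of_nat q"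
proof -
  have pull: "y * op_inner q A B = (\<Sum>p\<in>{..<q}\<times>{..<q}. cnj (A $$ p) * y * B $$ p / of_nat q)"
    for y A B
    by (simp add: op_inner_pairs sum_distrib_left sum_divide_distrib mult_ac)
  have "transfer q n W Y $$ (b,d)
      = (\<Sum>a<n. \<Sum>c<n. \<Sum>p\<in>{..<q}\<times>{..<q}. cnj (W a b $$ p) * Y $$ (a,c) * W c d $$ p / of_nat q)"
    using bd unfolding transfer_def pull by simp
  also have "\<dots> = (\<Sum>p\<in>{..<q}\<times>{..<q}. \<Sum>a<n. \<Sum>c<n. cnj (W a b $$ p) * Y $$ (a,c) * W c d $$ p / of_nat q)"
    by (rule sum_swap_outer)
  also have "\<dots> = (\<Sum>(u,v)\<in>{..<q}\<times>{..<q}.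
      (mat_adjoint (impo_slice n W u v) * Y * impo_slice n W u v) $$ (b,d) / of_nat q)"
  proof (intro sum.cong refl, clarify)
    fix u v
    show "(\<Sum>a<n. \<Sum>c<n. cnj (W a b $$ (u,v)) * Y $$ (a,c) * W c d $$ (u,v) / of_nat q)
      = (mat_adjoint (impo_slice n W u v) * Y * impo_slice n W u v) $$ (b,d) / of_nat q"
      unfolding sandwich_index[OF impo_slice_carrier Y bd] sum_divide_distrib
      using bd by (intro sum.cong refl) simp
  qed
  also have "\<dots> = (\<Sum>(u,v)\<in>{..<q}\<times>{..<q}.
      (mat_adjoint (impo_slice n W u v) * Y * impo_slice n W u v) $$ (b,d)) / of_nat q"
    by (simp only: sum_divide_distrib split_def)
  finally show ?thesis .
qed

lemma transfer_carrier [simp]: "transfer q n W Y \<in> carrier_mat n n"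
  by (simp add: transfer_def)

lemma transfer_congruence:
  assumes P: "P \<in> carrier_mat n k" and Y: "Y \<in> carrier_mat n n" and Z: "Z \<in> carrier_mat k k"
    and slices: "\<And>u v. u < q \<Longrightarrow> v < q \<Longrightarrow>
      mat_adjoint (impo_slice k W' u v) * Z * impo_slice k W' u v
      = mat_adjoint P * (mat_adjoint (impo_slice n W u v) * Y * impo_slice n W u v) * P"
  shows "transfer q k W' Z = mat_adjoint P * transfer q n W Y * P"
proof (rule eq_matI)
  fix b d
  assume "b < dim_row (mat_adjoint P * transfer q n W Y * P)"
    and "d < dim_col (mat_adjoint P * transfer q n W Y * P)"
  then have bd: "b < k" "d < k"
    using P by auto
  let ?F = "\<lambda>(u,v). mat_adjoint (impo_slice n W u v) * Y * impo_slice n W u v"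
  have "transfer q k W' Z $$ (b,d)
      = (\<Sum>p\<in>{..<q}\<times>{..<q}. (mat_adjoint P * ?F p * P) $$ (b,d)) / of_nat q"
    unfolding transfer_index[OF Z bd]
    by (intro arg_cong[where f = "\<lambda>x. x / of_nat q"] sum.cong refl) (auto simp: slices)
  also have "\<dots> = (mat_adjoint P * transfer q n W Y * P) $$ (b,d)"
    by (rule sandwich_sum_index[OF P transfer_carrier _ _ bd, symmetric])
      (auto simp: transfer_index Y split_def)
  finally show "transfer q k W' Z $$ (b,d) = (mat_adjoint P * transfer q n W Y * P) $$ (b,d)" .
qed (use P in \<open>auto simp: transfer_def\<close>)

lemma pos_semidef_transfer_eq_zero:
  assumes psd: "pos_semidef n X" and q: "1 \<le> q" and T: "transfer q n W X = 0\<^sub>m n n"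
    and uv: "u < q" "v < q"
  shows "X * impo_slice n W u v = 0\<^sub>m n n"
proof (rule eq_matI)
  have X: "X \<in> carrier_mat n n"
    using psd unfolding pos_semidef_def hermitian_mat_def by blast
  fix i b assume "i < dim_row (0\<^sub>m n n :: complex mat)" "b < dim_col (0\<^sub>m n n :: complex mat)"
  then have i: "i < n" and b: "b < n" by auto
  define Q where "Q = (\<lambda>(u,v). quad_form n X (\<lambda>a. impo_slice n W u v $$ (a,b)))"
  have diag: "(mat_adjoint (impo_slice n W u v) * X * impo_slice n W u v) $$ (b,b)
      = quad_form n X (\<lambda>a. impo_slice n W u v $$ (a,b))" for u v
    unfolding sandwich_index[OF impo_slice_carrier X b b] quad_form_def ..
  have "(\<Sum>p\<in>{..<q}\<times>{..<q}. Q p) / of_nat q = transfer q n W X $$ (b,b)"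
    unfolding transfer_index[OF X b b] Q_def diag ..
  then have "(\<Sum>p\<in>{..<q}\<times>{..<q}. Q p) / of_nat q = 0"
    using T b by simp
  then have "(\<Sum>p\<in>{..<q}\<times>{..<q}. Re (Q p)) = 0"
    using q by (simp flip: Re_sum)
  moreover have "\<And>p. 0 \<le> Re (Q p)"
    using psd unfolding pos_semidef_def Q_def by (simp add: split_def)
  ultimately have "Re (Q (u,v)) = 0"
    using uv by (subst (asm) sum_nonneg_eq_0_iff) auto
  then have "(\<Sum>j<n. X $$ (i,j) * impo_slice n W u v $$ (j,b)) = 0"
    using pos_semidef_null_vector[OF psd _ i] unfolding Q_def by simp
  then show "(X * impo_slice n W u v) $$ (i,b) = 0\<^sub>m n n $$ (i,b)"
    using X i b by (simp add: scalar_prod_def atLeast0LessThan)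
qed (use psd in \<open>auto simp: pos_semidef_def hermitian_mat_def\<close>)

lemma transfer_fixed_point_kernel_invariant:
  assumes psd: "pos_semidef n X" and q: "1 \<le> q" and T: "transfer q n W X = X"
    and P: "P \<in> carrier_mat n n" and XP: "X * P = 0\<^sub>m n n" and uv: "u < q" "v < q"
  shows "X * (impo_slice n W u v * P) = 0\<^sub>m n n"
proof -
  have X: "X \<in> carrier_mat n n"
    using psd unfolding pos_semidef_def hermitian_mat_def by blast
  define W' where "W' = impo_of_slices q (\<lambda>u v. impo_slice n W u v * P)"
  have slices: "impo_slice n W' u v = impo_slice n W u v * P" if "u < q" "v < q" for u v
    unfolding W'_def using that mult_carrier_mat[OF impo_slice_carrier P]
    by (rule impo_slice_impo_of_slices_carrier)
  have "transfer q n W' X = mat_adjoint P * transfer q n W X * P"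
  proof (rule transfer_congruence[OF P X X])
    fix u v assume "u < q" "v < q"
    then show "mat_adjoint (impo_slice n W' u v) * X * impo_slice n W' u v
      = mat_adjoint P * (mat_adjoint (impo_slice n W u v) * X * impo_slice n W u v) * P"
      using P X by (simp add: slices mat_adjoint_mult mult_mat_assoc_dims)
  qed
  also have "\<dots> = 0\<^sub>m n n"
    using P X by (simp add: T mult_mat_assoc_dims XP)
  finally have "transfer q n W' X = 0\<^sub>m n n" .
  from pos_semidef_transfer_eq_zero[OF psd q this uv] show ?thesis
    using uv by (simp add: slices)
qed

lemma transfer_fixed_point_invariant:
  assumes psd: "pos_semidef n X" and q: "1 \<le> q" and T: "transfer q n W X = X"
    and E: "E \<in> carrier_mat n n" and XE: "X * E = X" and uv: "u < q" "v < q"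
  shows "X * impo_slice n W u v * E = X * impo_slice n W u v"
proof -
  let ?S = "impo_slice n W u v"
  have X: "X \<in> carrier_mat n n"
    using psd unfolding pos_semidef_def hermitian_mat_def by blast
  have P: "1\<^sub>m n - E \<in> carrier_mat n n"
    using minus_carrier_mat[OF E] by simp
  have "X * (1\<^sub>m n - E) = 0\<^sub>m n n"
    using mult_minus_distrib_mat[OF X one_carrier_mat E] X XE by simp
  then have "X * (?S * (1\<^sub>m n - E)) = 0\<^sub>m n n"
    by (rule transfer_fixed_point_kernel_invariant[OF psd q T P _ uv])
  moreover have "X * (?S * (1\<^sub>m n - E)) = X * ?S - X * ?S * E"
  proof -
    have "?S * (1\<^sub>m n - E) = ?S - ?S * E"
      using mult_minus_distrib_mat[OF impo_slice_carrier one_carrier_mat E] by simp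
    moreover have "X * (?S - ?S * E) = X * ?S - X * (?S * E)"
      by (rule mult_minus_distrib_mat[OF X impo_slice_carrier mult_carrier_mat[OF impo_slice_carrier E]])
    ultimately show ?thesis
      using assoc_mult_mat[OF X impo_slice_carrier E] by simp
  qed
  ultimately have "X * ?S - X * ?S * E = 0\<^sub>m n n"
    by simp
  then have "X * ?S = X * ?S * E"
    by (rule mat_eq_if_minus_eq_zero[OF mult_carrier_mat[OF X impo_slice_carrier]
        mult_carrier_mat[OF mult_carrier_mat[OF X impo_slice_carrier] E]])
  then show ?thesis ..
qed

lemma slice_compression_invariant:
  assumes psd: "pos_semidef n X" and q: "1 \<le> q" and T: "transfer q n W X = X"
    and M: "M \<in> carrier_mat r n" and R: "R \<in> carrier_mat n r" and XRM: "X * R * M = X"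
    and inj: "\<And>w. w \<in> carrier_vec r \<Longrightarrow> (X * R) *\<^sub>v w = 0\<^sub>v n \<Longrightarrow> w = 0\<^sub>v r"
    and uv: "u < q" "v < q"
  shows "M * impo_slice n W u v * R * M = M * impo_slice n W u v"
proof -
  let ?S = "impo_slice n W u v"
  have X: "X \<in> carrier_mat n n"
    using psd unfolding pos_semidef_def hermitian_mat_def by blast
  note dims = carrier_matD[OF X] carrier_matD[OF M] carrier_matD[OF R]
  have XRMZ: "X * (R * (M * Z)) = X * Z" if "dim_row Z = n" for Z
    using XRM that dims by (simp add: mult_mat_assoc_dims[symmetric])
  have "X * ?S * (R * M) = X * ?S"
    using transfer_fixed_point_invariant[OF psd q T _ _ uv, of "R * M"] M R XRM dims
    by (simp add: mult_mat_assoc_dims)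
  then have "(X * R) * (M * ?S * R * M) = (X * R) * (M * ?S)"
    using dims by (simp add: mult_mat_assoc_dims XRMZ)
  moreover have "M * ?S * R * M \<in> carrier_mat r n" "M * ?S \<in> carrier_mat r n"
    using dims by (auto intro!: carrier_matI)
  ultimately show ?thesis
    using mult_mat_cancel_injective[OF mult_carrier_mat[OF X R] inj] by blast
qed

section \<open>Regular form and the compressed iMPO\<close>

lemma regular_form_slice_blocks:
  assumes W: "regular_form q chi W" and uv: "u < q" "v < q"
  shows "impo_slice (chi + 2) W u v = four_block_mat (impo_slice (chi + 1) W u v)
      (mat (chi + 1) 1 (\<lambda>(i,_). W i (chi + 1) $$ (u,v))) (0\<^sub>m 1 (chi + 1)) (of_bool (u = v) \<cdot>\<^sub>m 1\<^sub>m 1)"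
    and "col (impo_slice (chi + 1) W u v) 0 = of_bool (u = v) \<cdot>\<^sub>v unit_vec (chi + 1) 0"
proof -
  have W00: "W 0 0 = 1\<^sub>m q" and Wlast: "W (chi + 1) (chi + 1) = 1\<^sub>m q"
    and Wcol: "\<And>a. 0 < a \<Longrightarrow> a < chi + 2 \<Longrightarrow> W a 0 = 0\<^sub>m q q"
    and Wrow: "\<And>b. b < chi + 1 \<Longrightarrow> W (chi + 1) b = 0\<^sub>m q q"
    using W unfolding regular_form_def by blast+
  show "impo_slice (chi + 2) W u v = four_block_mat (impo_slice (chi + 1) W u v)
      (mat (chi + 1) 1 (\<lambda>(i,_). W i (chi + 1) $$ (u,v))) (0\<^sub>m 1 (chi + 1)) (of_bool (u = v) \<cdot>\<^sub>m 1\<^sub>m 1)"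
    (is "?S = ?B")
  proof (rule eq_matI)
    fix i j assume "i < dim_row ?B" and "j < dim_col ?B"
    then have i: "i < chi + 2" and j: "j < chi + 2"
      by auto
    show "?S $$ (i,j) = ?B $$ (i,j)"
    proof (cases "i < chi + 1")
      case True
      then show ?thesis
        using j by (cases "j < chi + 1") (auto simp: less_Suc_eq)
    next
      case False
      then have "i = chi + 1"
        using i by simp
      then show ?thesis
        using j uv Wlast Wrow[of j] by (cases "j < chi + 1") (auto simp: less_Suc_eq)
    qed
  qed auto
  show "col (impo_slice (chi + 1) W u v) 0 = of_bool (u = v) \<cdot>\<^sub>v unit_vec (chi + 1) 0"
  proof (rule eq_vecI)
    fix a assume "a < dim_vec (of_bool (u = v) \<cdot>\<^sub>v unit_vec (chi + 1) 0 :: complex vec)"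
    then have a: "a < chi + 1"
      by simp
    then show "col (impo_slice (chi + 1) W u v) 0 $ a = (of_bool (u = v) \<cdot>\<^sub>v unit_vec (chi + 1) 0) $ a"
      using uv W00 Wcol[of a] by (cases "a = 0") auto
  qed auto
qed

lemma regular_formI:
  assumes carrier: "\<And>a b. a < chi + 2 \<Longrightarrow> b < chi + 2 \<Longrightarrow> W a b \<in> carrier_mat q q"
    and col0: "\<And>u v. u < q \<Longrightarrow> v < q \<Longrightarrow>
      col (impo_slice (chi + 1) W u v) 0 = of_bool (u = v) \<cdot>\<^sub>v unit_vec (chi + 1) 0"
    and blocks: "\<And>u v. u < q \<Longrightarrow> v < q \<Longrightarrow> impo_slice (chi + 2) W u v
      = four_block_mat (impo_slice (chi + 1) W u v) (B u v) (0\<^sub>m 1 (chi + 1)) (of_bool (u = v) \<cdot>\<^sub>m 1\<^sub>m 1)"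
  shows "regular_form q chi W"
proof -
  have top: "W a 0 $$ (u,v) = of_bool (u = v \<and> a = 0)" if "a < chi + 1" "u < q" "v < q" for a u v
    using arg_cong[OF col0[OF that(2,3)], of "\<lambda>x. x $ a"] that by auto
  have bottom: "W (chi + 1) b $$ (u,v) = of_bool (u = v \<and> b = chi + 1)"
    if "b < chi + 2" "u < q" "v < q" for b u v
    using arg_cong[OF blocks[OF that(2,3)], of "\<lambda>S. S $$ (chi + 1, b)"] that by auto
  show ?thesis
    unfolding regular_form_def
  proof (intro conjI allI impI)
    show "W 0 0 = 1\<^sub>m q"
      using carrier[of 0 0] top[of 0] by (intro eq_matI) auto
    show "W (chi + 1) (chi + 1) = 1\<^sub>m q"
      using carrier[of "chi + 1" "chi + 1"] bottom[of "chi + 1"] by (intro eq_matI) auto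
  next
    fix a assume a: "0 < a \<and> a < chi + 2"
    show "W a 0 = 0\<^sub>m q q"
    proof (cases "a < chi + 1")
      case True
      then show ?thesis
        using a carrier[of a 0] top[of a] by (intro eq_matI) auto
    next
      case False
      then have "a = chi + 1"
        using a by simp
      then show ?thesis
        using carrier[of a 0] bottom[of 0] by (intro eq_matI) auto
    qed
  next
    fix b assume "b < chi + 1"
    then show "W (chi + 1) b = 0\<^sub>m q q"
      using carrier[of "chi + 1" b] bottom[of b] by (intro eq_matI) auto
  qed (use carrier in auto)
qed

definition block_diag_one :: "'a :: {zero,one} mat \<Rightarrow> 'a mat" where
  "block_diag_one A = four_block_mat A (0\<^sub>m (dim_row A) 1) (0\<^sub>m 1 (dim_col A)) (1\<^sub>m 1)"

lemma block_diag_one_carrier [simp]: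
  "A \<in> carrier_mat m n \<Longrightarrow> block_diag_one A \<in> carrier_mat (m + 1) (n + 1)"
  unfolding block_diag_one_def by auto

lemma block_diag_one_carrier_eq:
  "A \<in> carrier_mat m n \<Longrightarrow> block_diag_one A = four_block_mat A (0\<^sub>m m 1) (0\<^sub>m 1 n) (1\<^sub>m 1)"
  unfolding block_diag_one_def by auto

lemma index_block_diag_one:
  assumes "A \<in> carrier_mat m n" "i < m + 1" "j < n + 1"
  shows "block_diag_one A $$ (i,j) = (if i < m \<and> j < n then A $$ (i,j) else of_bool (i = m \<and> j = n))"
  using assms by (auto simp: block_diag_one_carrier_eq)

lemma block_diag_one_mult_four_block:
  fixes M A B E D :: "'a :: semiring_1 mat"
  assumes M: "M \<in> carrier_mat r n" and A: "A \<in> carrier_mat n k" and B: "B \<in> carrier_mat n 1"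
    and E: "E \<in> carrier_mat 1 k" and D: "D \<in> carrier_mat 1 1"
  shows "block_diag_one M * four_block_mat A B E D = four_block_mat (M * A) (M * B) E D"
  unfolding block_diag_one_carrier_eq[OF M]
  using mult_four_block_mat[OF M zero_carrier_mat zero_carrier_mat one_carrier_mat A B E D] M A B E D
  by simp

lemma four_block_mult_block_diag_one:
  fixes R A B E D :: "'a :: semiring_1 mat"
  assumes R: "R \<in> carrier_mat n k" and A: "A \<in> carrier_mat r n" and B: "B \<in> carrier_mat r 1"
    and E: "E \<in> carrier_mat 1 n" and D: "D \<in> carrier_mat 1 1"
  shows "four_block_mat A B E D * block_diag_one R = four_block_mat (A * R) B (E * R) D"
  unfolding block_diag_one_carrier_eq[OF R]
  using mult_four_block_mat[OF A B E D R zero_carrier_mat zero_carrier_mat one_carrier_mat] R A B E D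
  by simp

lemma block_diag_one_sandwich:
  fixes M R A B E D :: "'a :: semiring_1 mat"
  assumes M: "M \<in> carrier_mat r n" and R: "R \<in> carrier_mat n k" and A: "A \<in> carrier_mat n n"
    and B: "B \<in> carrier_mat n 1" and E: "E \<in> carrier_mat 1 n" and D: "D \<in> carrier_mat 1 1"
  shows "block_diag_one M * four_block_mat A B E D * block_diag_one R
    = four_block_mat (M * A * R) (M * B) (E * R) D"
  unfolding block_diag_one_mult_four_block[OF M A B E D]
  by (rule four_block_mult_block_diag_one[OF R mult_carrier_mat[OF M A] mult_carrier_mat[OF M B] E D])

definition compress_impo :: "nat \<Rightarrow> complex mat \<Rightarrow> complex mat \<Rightarrow> impo \<Rightarrow> impo" where
  "compress_impo q M R W =
     impo_of_slices q (\<lambda>u v. block_diag_one M * impo_slice (dim_col M + 1) W u v * block_diag_one R)"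

lemma compress_impo_slice:
  assumes W: "regular_form q chi W" and M: "M \<in> carrier_mat r (chi + 1)"
    and R: "R \<in> carrier_mat (chi + 1) r" and uv: "u < q" "v < q"
  shows "impo_slice (r + 1) (compress_impo q M R W) u v
      = four_block_mat (M * impo_slice (chi + 1) W u v * R)
          (M * mat (chi + 1) 1 (\<lambda>(i,_). W i (chi + 1) $$ (u,v))) (0\<^sub>m 1 r) (of_bool (u = v) \<cdot>\<^sub>m 1\<^sub>m 1)"
    and "impo_slice r (compress_impo q M R W) u v = M * impo_slice (chi + 1) W u v * R"
proof -
  have S: "impo_slice (chi + 2) W u v \<in> carrier_mat (chi + 1 + 1) (chi + 1 + 1)"
    by simp
  have dim: "dim_col M + 1 = chi + 2"
    using M by simp
  have "impo_slice (r + 1) (compress_impo q M R W) u v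
      = block_diag_one M * impo_slice (chi + 2) W u v * block_diag_one R"
    unfolding compress_impo_def dim
    by (rule impo_slice_impo_of_slices_carrier[where F = "\<lambda>u v. block_diag_one M * impo_slice (chi + 2) W u v
        * block_diag_one R", OF uv mult_carrier_mat[OF mult_carrier_mat[OF
        block_diag_one_carrier[OF M] S] block_diag_one_carrier[OF R]]])
  also have "\<dots> = four_block_mat (M * impo_slice (chi + 1) W u v * R)
      (M * mat (chi + 1) 1 (\<lambda>(i,_). W i (chi + 1) $$ (u,v))) (0\<^sub>m 1 r) (of_bool (u = v) \<cdot>\<^sub>m 1\<^sub>m 1)"
    unfolding regular_form_slice_blocks(1)[OF W uv] using M R
    by (subst block_diag_one_sandwich[OF M R]) auto
  finally show top: "impo_slice (r + 1) (compress_impo q M R W) u v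
      = four_block_mat (M * impo_slice (chi + 1) W u v * R)
          (M * mat (chi + 1) 1 (\<lambda>(i,_). W i (chi + 1) $$ (u,v))) (0\<^sub>m 1 r) (of_bool (u = v) \<cdot>\<^sub>m 1\<^sub>m 1)" .
  have "impo_slice r (compress_impo q M R W) u v
      = mat r r (\<lambda>(a,b). impo_slice (r + 1) (compress_impo q M R W) u v $$ (a,b))"
    by (rule impo_slice_truncate) simp
  also have "\<dots> = M * impo_slice (chi + 1) W u v * R"
    unfolding top using M R by (intro eq_matI) auto
  finally show "impo_slice r (compress_impo q M R W) u v = M * impo_slice (chi + 1) W u v * R" .
qed

lemma gauge_rel_iff_slices:
  assumes L: "L \<in> carrier_mat n' n"
  shows "gauge_rel q n' n L W W' \<longleftrightarrow>
    (\<forall>u<q. \<forall>v<q. L * impo_slice n W u v = impo_slice n' W' u v * L)"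
proof -
  have lhs: "(L * impo_slice n W u v) $$ (i,j) = (\<Sum>k<n. L $$ (i,k) * W k j $$ (u,v))"
    if "i < n'" "j < n" for i j u v
    using L that by (simp add: scalar_prod_def atLeast0LessThan)
  have rhs: "(impo_slice n' W' u v * L) $$ (i,j) = (\<Sum>k<n'. W' i k $$ (u,v) * L $$ (k,j))"
    if "i < n'" "j < n" for i j u v
    using L that by (simp add: scalar_prod_def atLeast0LessThan)
  have slice_eq: "L * impo_slice n W u v = impo_slice n' W' u v * L \<longleftrightarrow>
      (\<forall>i<n'. \<forall>j<n. (\<Sum>k<n. L $$ (i,k) * W k j $$ (u,v)) = (\<Sum>k<n'. W' i k $$ (u,v) * L $$ (k,j)))"
    for u v
  proof -
    have "L * impo_slice n W u v = impo_slice n' W' u v * L \<longleftrightarrow>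
        (\<forall>i<n'. \<forall>j<n. (L * impo_slice n W u v) $$ (i,j) = (impo_slice n' W' u v * L) $$ (i,j))"
      using carrier_matD[OF L] by (simp add: mat_eq_iff index_mult_mat(2,3) del: index_mult_mat(1))
    then show ?thesis
      using lhs rhs by (simp del: index_mult_mat(1))
  qed
  show ?thesis
    unfolding gauge_rel_def slice_eq by blast
qed

lemma gauge_rel_compress_impo:
  assumes W: "regular_form q chi W" and M: "M \<in> carrier_mat r (chi + 1)"
    and R: "R \<in> carrier_mat (chi + 1) r"
    and invariant: "\<And>u v. u < q \<Longrightarrow> v < q \<Longrightarrow>
      M * impo_slice (chi + 1) W u v * R * M = M * impo_slice (chi + 1) W u v"
  shows "gauge_rel q (r + 1) (chi + 2) (block_diag_one M) W (compress_impo q M R W)"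
proof -
  have "block_diag_one M * impo_slice (chi + 2) W u v
      = impo_slice (r + 1) (compress_impo q M R W) u v * block_diag_one M"
    if uv: "u < q" "v < q" for u v
  proof -
    let ?V = "impo_slice (chi + 1) W u v" and ?B = "mat (chi + 1) 1 (\<lambda>(i,_). W i (chi + 1) $$ (u,v))"
      and ?D = "of_bool (u = v) \<cdot>\<^sub>m 1\<^sub>m 1 :: complex mat"
    have "block_diag_one M * impo_slice (chi + 2) W u v
        = four_block_mat (M * ?V) (M * ?B) (0\<^sub>m 1 (chi + 1)) ?D"
      unfolding regular_form_slice_blocks(1)[OF W uv] by (rule block_diag_one_mult_four_block[OF M]) auto
    also have "\<dots> = four_block_mat (M * ?V * R * M) (M * ?B) (0\<^sub>m 1 r * M) ?D"
      using invariant[OF uv] M by simp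
    also have "\<dots> = impo_slice (r + 1) (compress_impo q M R W) u v * block_diag_one M"
      unfolding compress_impo_slice(1)[OF W M R uv]
      by (rule four_block_mult_block_diag_one[symmetric]) (use M R in auto)
    finally show ?thesis .
  qed
  moreover have "block_diag_one M \<in> carrier_mat (r + 1) (chi + 2)"
    using block_diag_one_carrier[OF M] by simp
  ultimately show ?thesis
    by (simp add: gauge_rel_iff_slices)
qed

lemma regular_form_compress_impo:
  assumes W: "regular_form q chi W" and M: "M \<in> carrier_mat (chi' + 1) (chi + 1)"
    and R: "R \<in> carrier_mat (chi + 1) (chi' + 1)"
    and M0: "col M 0 = unit_vec (chi' + 1) 0" and R0: "col R 0 = unit_vec (chi + 1) 0"
  shows "regular_form q chi' (compress_impo q M R W)"
proof (rule regular_formI)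
  fix u v assume uv: "u < q" "v < q"
  have "col (M * impo_slice (chi + 1) W u v * R) 0 = (M * impo_slice (chi + 1) W u v) *\<^sub>v col R 0"
    by (rule col_mult2[OF mult_carrier_mat[OF M impo_slice_carrier] R]) simp
  also have "\<dots> = M *\<^sub>v (impo_slice (chi + 1) W u v *\<^sub>v col R 0)"
    by (rule assoc_mult_mat_vec[OF M impo_slice_carrier]) (use col_dim[of R 0] R in simp)
  also have "\<dots> = M *\<^sub>v col (impo_slice (chi + 1) W u v) 0"
    unfolding R0 by (simp add: mult_mat_vec_unit_vec[OF impo_slice_carrier])
  also have "\<dots> = of_bool (u = v) \<cdot>\<^sub>v unit_vec (chi' + 1) 0"
    unfolding regular_form_slice_blocks(2)[OF W uv] mult_mat_vec[OF M unit_vec_carrier] M0[symmetric]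
    using mult_mat_vec_unit_vec[OF M, of 0] by simp
  finally show "col (impo_slice (chi' + 1) (compress_impo q M R W) u v) 0
      = of_bool (u = v) \<cdot>\<^sub>v unit_vec (chi' + 1) 0"
    unfolding compress_impo_slice(2)[OF W M R uv] .
  show "impo_slice (chi' + 2) (compress_impo q M R W) u v
      = four_block_mat (impo_slice (chi' + 1) (compress_impo q M R W) u v)
          (M * mat (chi + 1) 1 (\<lambda>(i,_). W i (chi + 1) $$ (u,v))) (0\<^sub>m 1 (chi' + 1))
          (of_bool (u = v) \<cdot>\<^sub>m 1\<^sub>m 1)"
    using compress_impo_slice[OF W M R uv] by (simp add: numeral_2_eq_2)
qed (simp add: compress_impo_def)

lemma gauge_block_form_block_diag_one:
  assumes M: "M \<in> carrier_mat (chi' + 1) (chi + 1)" and M0: "col M 0 = unit_vec (chi' + 1) 0"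
  shows "gauge_block_form chi' chi (block_diag_one M)"
proof -
  have "M $$ (i,0) = of_bool (i = 0)" if "i < chi' + 1" for i
    using arg_cong[OF M0, of "\<lambda>x. x $ i"] M that by simp
  moreover have "block_diag_one M \<in> carrier_mat (chi' + 2) (chi + 2)"
    using block_diag_one_carrier[OF M] by simp
  ultimately show ?thesis
    unfolding gauge_block_form_def by (auto simp: index_block_diag_one[OF M])
qed

lemma sandwich_corner_unit_col:
  fixes R Y :: "complex mat"
  assumes R: "R \<in> carrier_mat n r" and Y: "Y \<in> carrier_mat n n" and nr: "0 < n" "0 < r"
    and R0: "col R 0 = unit_vec n 0"
  shows "(mat_adjoint R * Y * R) $$ (0,0) = Y $$ (0,0)"
proof -
  have R_col: "R $$ (a,0) = (if a = 0 then 1 else 0)" if "a < n" for a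
    using arg_cong[OF R0, of "\<lambda>x. x $ a"] that R nr by simp
  have inner: "(\<Sum>c<n. cnj (R $$ (a,0)) * Y $$ (a,c) * R $$ (c,0)) = cnj (R $$ (a,0)) * Y $$ (a,0)" for a
  proof -
    have "(\<Sum>c<n. cnj (R $$ (a,0)) * Y $$ (a,c) * R $$ (c,0))
        = (\<Sum>c<n. if c = 0 then cnj (R $$ (a,0)) * Y $$ (a,c) else 0)"
      by (rule sum.cong) (auto simp: R_col)
    then show ?thesis
      using nr by simp
  qed
  have "(mat_adjoint R * Y * R) $$ (0,0) = (\<Sum>a<n. if a = 0 then Y $$ (a,0) else 0)"
    unfolding sandwich_index[OF R Y nr(2) nr(2)] inner by (rule sum.cong) (auto simp: R_col)
  also have "\<dots> = Y $$ (0,0)"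
    using nr by simp
  finally show ?thesis .
qed

lemma sandwich_compress:
  fixes X M R V :: "complex mat"
  assumes X: "X \<in> carrier_mat n n" "mat_adjoint X = X" and M: "M \<in> carrier_mat r n"
    and R: "R \<in> carrier_mat n r" and V: "V \<in> carrier_mat n n" and XRM: "X * R * M = X"
  shows "mat_adjoint (M * V * R) * (mat_adjoint R * X * R) * (M * V * R)
    = mat_adjoint R * (mat_adjoint V * X * V) * R"
proof -
  note dims = carrier_matD[OF X(1)] carrier_matD[OF M] carrier_matD[OF R] carrier_matD[OF V]
  have XRMZ: "X * (R * (M * Z)) = X * Z" if "dim_row Z = n" for Z
    using XRM that dims by (simp add: mult_mat_assoc_dims[symmetric])
  have "mat_adjoint M * (mat_adjoint R * X) = X"
    using arg_cong[OF XRM, of mat_adjoint] X(2) dims by (simp add: mat_adjoint_mult)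
  then have MRXZ: "mat_adjoint M * (mat_adjoint R * (X * Z)) = X * Z" if "dim_row Z = n" for Z
    using that dims by (simp add: mult_mat_assoc_dims[symmetric])
  show ?thesis
    using dims by (simp add: mat_adjoint_mult mult_mat_assoc_dims XRMZ MRXZ)
qed

lemma leading_eigvec_compress_impo:
  assumes W: "regular_form q chi W" and X: "leading_eigvec q chi W X"
    and herm: "hermitian_mat (chi + 1) X"
    and M: "M \<in> carrier_mat (chi' + 1) (chi + 1)" and R: "R \<in> carrier_mat (chi + 1) (chi' + 1)"
    and XRM: "X * R * M = X" and R0: "col R 0 = unit_vec (chi + 1) 0"
  shows "leading_eigvec q chi' (compress_impo q M R W) (mat_adjoint R * X * R)"
proof -
  have Xc: "X \<in> carrier_mat (chi + 1) (chi + 1)" and T: "transfer q (chi + 1) W X = X"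
    and X00: "X $$ (0,0) = 1"
    using X unfolding leading_eigvec_def V_block_def by blast+
  have adj: "mat_adjoint X = X"
    using herm unfolding hermitian_mat_iff_mat_adjoint by blast
  have X'c: "mat_adjoint R * X * R \<in> carrier_mat (chi' + 1) (chi' + 1)"
    using mult_carrier_mat[OF mult_carrier_mat[OF mat_adjoint_carrier_mat[OF R] Xc] R] .
  have "transfer q (chi' + 1) (compress_impo q M R W) (mat_adjoint R * X * R)
      = mat_adjoint R * transfer q (chi + 1) W X * R"
  proof (rule transfer_congruence[OF R Xc X'c])
    fix u v assume uv: "u < q" "v < q"
    show "mat_adjoint (impo_slice (chi' + 1) (compress_impo q M R W) u v) * (mat_adjoint R * X * R)
        * impo_slice (chi' + 1) (compress_impo q M R W) u v
      = mat_adjoint R * (mat_adjoint (impo_slice (chi + 1) W u v) * X * impo_slice (chi + 1) W u v) * R"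
      unfolding compress_impo_slice(2)[OF W M R uv]
      by (rule sandwich_compress[OF Xc adj M R impo_slice_carrier XRM])
  qed
  moreover have "(mat_adjoint R * X * R) $$ (0,0) = 1"
    using sandwich_corner_unit_col[OF R Xc _ _ R0] X00 by simp
  ultimately show ?thesis
    unfolding leading_eigvec_def V_block_def using X'c T by simp
qed

theorem proposition7:
  fixes q chi chi' :: nat and W :: impo and X :: "complex mat"
  assumes "q \<ge> 1"
    and "regular_form q chi W"
    and "first_degree q chi W"
    and "leading_eigvec q chi W X"
    and "pos_semidef (chi+1) X"
    and "vec_space.rank (chi+1) X = 1 + chi'"
    and "chi' \<le> chi"
  shows "\<exists>L W'. gauge_block_form chi' chi L \<and> gauge_rel q (chi'+2) (chi+2) L W W' \<and>
           regular_form q chi' W' \<and>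
           (\<exists>X'. leading_eigvec q chi' W' X' \<and> pos_def (chi'+1) X')"
proof -
  note q = assms(1) and W = assms(2) and X = assms(4) and psd = assms(5)
  have Xc: "X \<in> carrier_mat (chi + 1) (chi + 1)" and T: "transfer q (chi + 1) W X = X"
    and X00: "X $$ (0,0) = 1"
    using X unfolding leading_eigvec_def V_block_def by blast+
  have nc: "0 < chi + 1"
    by simp
  have "col X 0 $ 0 = 1"
    using Xc X00 by simp
  then have nz: "col X 0 \<noteq> 0\<^sub>v (chi + 1)"
    by auto
  have rank: "vec_space.rank (chi + 1) X = chi' + 1"
    using assms(6) by simp
  obtain M R where M: "M \<in> carrier_mat (chi' + 1) (chi + 1)" and R: "R \<in> carrier_mat (chi + 1) (chi' + 1)"
    and XRM: "X * R * M = X" and M0: "col M 0 = unit_vec (chi' + 1) 0"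
    and R0: "col R 0 = unit_vec (chi + 1) 0"
    and inj: "\<And>w. w \<in> carrier_vec (chi' + 1) \<Longrightarrow> (X * R) *\<^sub>v w = 0\<^sub>v (chi + 1) \<Longrightarrow> w = 0\<^sub>v (chi' + 1)"
    using column_selection_factorization[OF Xc nc nz, unfolded rank] by blast
  have invariant: "M * impo_slice (chi + 1) W u v * R * M = M * impo_slice (chi + 1) W u v"
    if "u < q" "v < q" for u v
    using slice_compression_invariant[OF psd q T M R XRM inj that] .
  have herm: "hermitian_mat (chi + 1) X"
    using psd unfolding pos_semidef_def by blast
  show ?thesis
  proof (intro exI conjI)
    show "gauge_block_form chi' chi (block_diag_one M)"
      by (rule gauge_block_form_block_diag_one[OF M M0])
    show "gauge_rel q (chi' + 2) (chi + 2) (block_diag_one M) W (compress_impo q M R W)"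
      using gauge_rel_compress_impo[OF W M R invariant] by simp
    show "regular_form q chi' (compress_impo q M R W)"
      by (rule regular_form_compress_impo[OF W M R M0 R0])
    show "leading_eigvec q chi' (compress_impo q M R W) (mat_adjoint R * X * R)"
      by (rule leading_eigvec_compress_impo[OF W X herm M R XRM R0])
    show "pos_def (chi' + 1) (mat_adjoint R * X * R)"
      by (rule pos_def_congruence[OF psd R inj])
  qed
qed

end
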